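(* Let $S$ be a subset with $\mathbb{R}\times[0,1)\subset S\subset\mathbb{R}\times[0,1]$ which is open in $\mathbb{R}\times[0,1]$. Then there exist a set $S'$ and a homeomorphism $h:S\to S'$ such that: (1) $\mathbb{R}\times[0,1)\subset S'\subset S\subset\mathbb{R}\times[0,1]$; (2) the connected components of $S'\cap(\mathbb{R}\times\{1\})$ have closures which are bounded in $\mathbb{R}^2$ and mutually disjoint; (3) $h$ is the identity on $\mathbb{R}\times\{0\}$; (4) $h$ preserves the second coordinate, i.e. $h(x,y)=(h_1(x,y),y)$ for all $(x,y)\in S$ (in particular $h$ maps horizontal leaves to horizontal leaves). *)

theory Defs
  imports "HOL-Analysis.Analysis"
begin

end

theory Submission
  imports Defs
begin

text \<open>
  Squash the first coordinate into \<open>(-1, 1)\<close> by \<open>u = x / (1 + \<bar>x\<bar>)\<close> and parametrise the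
  leaves by \<open>t = 1 - y\<close>, so that the top edge is \<open>t = 0\<close>. The points of \<open>[-1, 1]\<close> not coming
  from the top slice \<open>U = {x. (x, 1) \<in> S}\<close> form a closed gap set \<open>K\<close> containing \<open>\<plusminus>1\<close>. On the leaf
  \<open>t\<close> move \<open>u\<close> by a quarter of the difference of its distances to \<open>K\<close> from the left and from the
  right, where points of \<open>K\<close> on the wrong side are charged \<open>min 3 (\<bar>u - k\<bar> / t)\<close>. Both one-sided
  distances are 1-Lipschitz, so the map is strictly increasing and continuous on every leaf; at
  \<open>t = 1\<close> they coincide and the map is the identity, while at \<open>t = 0\<close> each gap \<open>(a, b)\<close> of \<open>K\<close> is
  mapped affinely onto its middle half \<open>[(3a + b)/4, (a + 3b)/4]\<close>. So the components of the new
  top edge lie in pairwise disjoint compact boxes, and a leafwise strictly increasing map on a set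
  that is locally full along the leaves is a homeomorphism onto its image.
\<close>

section \<open>Squashing the line into \<open>(-1, 1)\<close>\<close>

definition squash :: "real \<Rightarrow> real" where
  "squash x = x / (1 + \<bar>x\<bar>)"

definition unsquash :: "real \<Rightarrow> real" where
  "unsquash u = u / (1 - \<bar>u\<bar>)"

lemma abs_squash_less: "\<bar>squash x\<bar> < 1"
  unfolding squash_def by (auto simp: abs_if divide_simps)

lemma unsquash_squash [simp]: "unsquash (squash x) = x"
  unfolding squash_def unsquash_def by (auto simp: abs_if divide_simps split: if_splits)

lemma squash_unsquash: "\<bar>u\<bar> < 1 \<Longrightarrow> squash (unsquash u) = u"
  unfolding squash_def unsquash_def by (auto simp: abs_if divide_simps split: if_splits)

lemma squash_less_squash:
  assumes "x < y"
  shows "squash x < squash y"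
proof (cases "0 \<le> x \<or> y < 0")
  case True
  then show ?thesis
    using assms unfolding squash_def
    by (cases "0 \<le> x"; cases "0 \<le> y") (auto simp: divide_simps algebra_simps)
next
  case False
  then have "squash x < 0" "0 \<le> squash y"
    unfolding squash_def by (auto simp: divide_simps abs_if)
  then show ?thesis by simp
qed

lemma squash_le_squash: "x \<le> y \<Longrightarrow> squash x \<le> squash y"
  using squash_less_squash by (cases "x = y") (auto simp: order.order_iff_strict)

lemma unsquash_less_unsquash: "\<bar>u\<bar> < 1 \<Longrightarrow> \<bar>v\<bar> < 1 \<Longrightarrow> u < v \<Longrightarrow> unsquash u < unsquash v"
  by (metis squash_unsquash squash_less_squash not_less_iff_gr_or_eq)

lemma unsquash_le_unsquash: "\<bar>u\<bar> < 1 \<Longrightarrow> \<bar>v\<bar> < 1 \<Longrightarrow> u \<le> v \<Longrightarrow> unsquash u \<le> unsquash v"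
  using unsquash_less_unsquash by (cases "u = v") (auto simp: order.order_iff_strict)

lemma squash_mem_image_iff: "squash x \<in> squash ` U \<longleftrightarrow> x \<in> U"
  by (metis image_iff unsquash_squash)

lemma continuous_on_squash: "continuous_on A squash"
  unfolding squash_def by (intro continuous_intros) (auto simp: abs_if add_nonneg_nonneg)

lemma continuous_on_unsquash: "continuous_on {-1<..<1} unsquash"
  unfolding unsquash_def by (intro continuous_intros) auto

lemma open_squash_image:
  assumes "open U"
  shows "open (squash ` U)"
proof -
  have "squash ` U = {-1<..<1} \<inter> unsquash -` U"
    using abs_squash_less squash_unsquash by (force simp: abs_less_iff image_iff)
  moreover have "open ({-1<..<1} \<inter> unsquash -` U)"
    by (rule continuous_open_preimage[OF continuous_on_unsquash]) (use assms in auto)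
  ultimately show ?thesis by simp
qed

section \<open>One-sided distances to the gap set\<close>

text \<open>
  The cap 3 exceeds every distance inside \<open>[-1, 1]\<close>: at \<open>t = 0\<close> points on the wrong side never
  compete, and at \<open>t = 1\<close> the value is just \<open>\<bar>s\<bar>\<close>.
\<close>
definition cutoff_dist :: "real \<Rightarrow> real \<Rightarrow> real" where
  "cutoff_dist s t = (if t = 0 then (if 0 \<le> s then s else 3) else max s (min 3 (- s / t)))"

lemma cutoff_dist_nonneg:
  assumes "0 \<le> t"
  shows "0 \<le> cutoff_dist s t"
proof (cases "t = 0 \<or> 0 \<le> s")
  case False
  then have "0 \<le> -s/t" using assms by (simp add: divide_nonpos_pos)
  then show ?thesis using False by (simp add: cutoff_dist_def)
qed (auto simp: cutoff_dist_def)

lemma cutoff_dist_nonneg_arg: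
  assumes "0 \<le> s" "0 \<le> t"
  shows "cutoff_dist s t = s"
proof (cases "t = 0")
  case False
  have "-(s/t) \<le> s" using assms divide_nonneg_nonneg[of s t] by linarith
  then have "max s (min 3 (-s/t)) = s" by (simp add: max_absorb1 min_le_iff_disj)
  then show ?thesis using False by (simp add: cutoff_dist_def)
qed (use assms in \<open>simp add: cutoff_dist_def\<close>)

lemma cutoff_dist_neg_arg:
  assumes "s < 0" "t = 0 \<or> 0 < t \<and> 3 * t \<le> - s"
  shows "cutoff_dist s t = 3"
proof (cases "t = 0")
  case False
  then have "3 \<le> -s/t" "0 < t" using assms by (auto simp: divide_simps)
  with assms show ?thesis by (simp add: cutoff_dist_def)
qed (use assms in \<open>simp add: cutoff_dist_def\<close>)

lemma cutoff_dist_add_le: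
  assumes "0 \<le> d" "0 \<le> t"
  shows "cutoff_dist (s + d) t \<le> cutoff_dist s t + d"
proof (cases "t = 0")
  case False
  then have "-(s + d)/t \<le> -s/t"
    using assms divide_right_mono[of "-(s+d)" "-s" t] by simp
  then have "max (s + d) (min 3 (-(s + d)/t)) \<le> max s (min 3 (-s/t)) + d"
    using assms(1) by (simp add: max_def min_def)
  then show ?thesis using False by (simp add: cutoff_dist_def)
qed (use assms in \<open>auto simp: cutoff_dist_def\<close>)

lemma cutoff_dist_at_1: "\<bar>s\<bar> \<le> 3 \<Longrightarrow> cutoff_dist s 1 = \<bar>s\<bar>"
  unfolding cutoff_dist_def by auto

lemma continuous_on_cutoff_dist: "continuous_on {z. 0 < snd z} (\<lambda>z. cutoff_dist (fst z) (snd z))"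
proof -
  have "continuous_on {z. 0 < snd z} (\<lambda>z::real \<times> real. max (fst z) (min 3 (- fst z / snd z)))"
    by (intro continuous_intros) auto
  then show ?thesis by (rule continuous_on_eq) (auto simp: cutoff_dist_def)
qed

lemma bdd_below_cutoff_dist_image: "0 \<le> t \<Longrightarrow> bdd_below ((\<lambda>k. cutoff_dist (f k) t) ` A)"
  by (rule bdd_belowI[where m = 0]) (auto simp: cutoff_dist_nonneg)

lemma Inf_image_le_add:
  fixes f g :: "'a \<Rightarrow> real"
  assumes "A \<noteq> {}" "bdd_below (f ` A)" "\<And>k. k \<in> A \<Longrightarrow> f k \<le> g k + c"
  shows "Inf (f ` A) \<le> Inf (g ` A) + c"
proof -
  have "Inf (f ` A) - c \<le> Inf (g ` A)"
  proof (rule cInf_greatest)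
    show "g ` A \<noteq> {}" using assms by auto
  next
    fix x assume "x \<in> g ` A"
    then obtain k where k: "k \<in> A" "x = g k" by auto
    have "Inf (f ` A) \<le> f k" by (rule cInf_lower) (use k assms in auto)
    then show "Inf (f ` A) - c \<le> x" using k assms(3)[of k] by simp
  qed
  then show ?thesis by simp
qed

lemma continuous_on_Inf_equicontinuous:
  fixes F :: "'a::metric_space \<Rightarrow> 'b \<Rightarrow> real"
  assumes "K \<noteq> {}" and bdd: "\<And>z. z \<in> A \<Longrightarrow> bdd_below (F z ` K)"
    and equicont: "\<And>z0 e. z0 \<in> A \<Longrightarrow> 0 < e \<Longrightarrow>
      \<exists>d>0. \<forall>z\<in>A. dist z z0 < d \<longrightarrow> (\<forall>k\<in>K. \<bar>F z k - F z0 k\<bar> < e)"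
  shows "continuous_on A (\<lambda>z. Inf (F z ` K))"
  unfolding continuous_on_iff
proof (intro ballI allI impI)
  fix z0 and e :: real
  assume z0: "z0 \<in> A" and e: "0 < e"
  then obtain d where d: "0 < d" "\<And>z k. z \<in> A \<Longrightarrow> dist z z0 < d \<Longrightarrow> k \<in> K \<Longrightarrow> \<bar>F z k - F z0 k\<bar> < e/2"
    using equicont[of z0 "e/2"] by auto
  show "\<exists>d>0. \<forall>z\<in>A. dist z z0 < d \<longrightarrow> dist (Inf (F z ` K)) (Inf (F z0 ` K)) < e"
  proof (intro exI conjI ballI impI)
    fix z assume z: "z \<in> A" "dist z z0 < d"
    have close: "F z k \<le> F z0 k + e/2" "F z0 k \<le> F z k + e/2" if "k \<in> K" for k
      using d(2)[OF z that] by arith+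
    have "Inf (F z ` K) \<le> Inf (F z0 ` K) + e/2"
      by (rule Inf_image_le_add[OF assms(1) bdd[OF z(1)] close(1)])
    moreover have "Inf (F z0 ` K) \<le> Inf (F z ` K) + e/2"
      by (rule Inf_image_le_add[OF assms(1) bdd[OF z0] close(2)])
    ultimately show "dist (Inf (F z ` K)) (Inf (F z0 ` K)) < e"
      using e by (simp add: dist_real_def abs_le_iff)
  qed (rule d(1))
qed

lemma cutoff_dist_equicontinuous:
  assumes K: "K \<subseteq> {-1..1}" and \<sigma>: "\<bar>\<sigma>\<bar> = 1" and z0: "z0 \<in> {z. 0 < snd z}" and e: "0 < e"
  shows "\<exists>d>0. \<forall>z\<in>{z. 0 < snd z}. dist z z0 < d \<longrightarrow>
    (\<forall>k\<in>K. \<bar>cutoff_dist (\<sigma> * (fst z - k)) (snd z) - cutoff_dist (\<sigma> * (fst z0 - k)) (snd z0)\<bar> < e)"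
proof -
  obtain u0 t0 where z0_eq: "z0 = (u0, t0)" and t0: "0 < t0" using z0 by (cases z0) auto
  define C where "C = cball (0::real) (\<bar>u0\<bar> + 3) \<times> {t0/2 .. t0 + 1}"
  have "compact C" unfolding C_def by (intro compact_Times) auto
  moreover have "continuous_on C (\<lambda>z. cutoff_dist (fst z) (snd z))"
    by (rule continuous_on_subset[OF continuous_on_cutoff_dist]) (use t0 in \<open>auto simp: C_def\<close>)
  ultimately have "uniformly_continuous_on C (\<lambda>z. cutoff_dist (fst z) (snd z))"
    by (rule compact_uniformly_continuous[rotated])
  then obtain d1 where d1: "0 < d1" "\<And>x x'. x \<in> C \<Longrightarrow> x' \<in> C \<Longrightarrow> dist x' x < d1 \<Longrightarrow>
      dist (cutoff_dist (fst x') (snd x')) (cutoff_dist (fst x) (snd x)) < e"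
    unfolding uniformly_continuous_on_def using e by metis
  define d where "d = min d1 (min 1 (t0/2))"
  show ?thesis
    unfolding z0_eq fst_conv snd_conv
  proof (intro exI conjI ballI impI)
    show "0 < d" using d1 t0 by (simp add: d_def)
    fix z k assume z: "z \<in> {z. 0 < snd z}" "dist z (u0, t0) < d" and k: "k \<in> K"
    obtain u t where zu: "z = (u, t)" by (cases z)
    have "\<bar>u - u0\<bar> < d" "\<bar>t - t0\<bar> < d" "d \<le> t0/2" "d \<le> 1"
      using z(2) zu dist_fst_le[of z "(u0, t0)"] dist_snd_le[of z "(u0, t0)"]
      by (auto simp: dist_real_def d_def)
    moreover have "-1 \<le> k" "k \<le> 1" using k K by auto
    ultimately have "\<bar>u - k\<bar> \<le> \<bar>u0\<bar> + 3" "\<bar>u0 - k\<bar> \<le> \<bar>u0\<bar> + 3" "t0/2 \<le> t" "t \<le> t0 + 1"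
      by arith+
    then have in_C: "(\<sigma> * (u0 - k), t0) \<in> C" "(\<sigma> * (u - k), t) \<in> C"
      using \<sigma> t0 by (auto simp: C_def abs_mult)
    have "dist (\<sigma> * (u - k), t) (\<sigma> * (u0 - k), t0) = dist (u, t) (u0, t0)"
      using \<sigma> by (simp add: dist_Pair_Pair dist_real_def right_diff_distrib[symmetric] abs_mult)
    also have "\<dots> < d1" using z(2) zu d_def by simp
    finally show "\<bar>cutoff_dist (\<sigma> * (fst z - k)) (snd z) - cutoff_dist (\<sigma> * (u0 - k)) t0\<bar> < e"
      using d1(2)[OF in_C] zu by (simp add: dist_real_def)
  qed
qed

definition gap_set :: "real set \<Rightarrow> real set" where
  "gap_set U = {-1..1} - squash ` U"

definition left_dist :: "real set \<Rightarrow> real \<Rightarrow> real \<Rightarrow> real" where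
  "left_dist U u t = Inf ((\<lambda>k. cutoff_dist (u - k) t) ` gap_set U)"

definition right_dist :: "real set \<Rightarrow> real \<Rightarrow> real \<Rightarrow> real" where
  "right_dist U u t = Inf ((\<lambda>k. cutoff_dist (k - u) t) ` gap_set U)"

definition compress :: "real set \<Rightarrow> real \<Rightarrow> real \<Rightarrow> real" where
  "compress U u t = u - (left_dist U u t - right_dist U u t) / 4"

lemma gap_set_subset: "gap_set U \<subseteq> {-1..1}"
  unfolding gap_set_def by auto

lemma pm1_mem_gap_set: "-1 \<in> gap_set U" "1 \<in> gap_set U"
  unfolding gap_set_def using abs_squash_less by (auto simp: abs_less_iff) (metis less_irrefl)+

lemma gap_set_nonempty: "gap_set U \<noteq> {}"
  using pm1_mem_gap_set by auto

lemma closed_gap_set: "open U \<Longrightarrow> closed (gap_set U)"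
  unfolding gap_set_def using open_squash_image by (simp add: closed_Diff)

lemma left_dist_add_le:
  assumes "0 \<le> d" "0 \<le> t"
  shows "left_dist U (u + d) t \<le> left_dist U u t + d"
  unfolding left_dist_def
proof (rule Inf_image_le_add[OF gap_set_nonempty bdd_below_cutoff_dist_image[OF assms(2)]])
  show "cutoff_dist (u + d - k) t \<le> cutoff_dist (u - k) t + d" for k
    using cutoff_dist_add_le[OF assms, of "u - k"] by (simp add: algebra_simps)
qed

lemma right_dist_le_add:
  assumes "0 \<le> d" "0 \<le> t"
  shows "right_dist U u t \<le> right_dist U (u + d) t + d"
  unfolding right_dist_def
proof (rule Inf_image_le_add[OF gap_set_nonempty bdd_below_cutoff_dist_image[OF assms(2)]])
  show "cutoff_dist (k - u) t \<le> cutoff_dist (k - (u + d)) t + d" for k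
    using cutoff_dist_add_le[OF assms, of "k - (u + d)"] by (simp add: algebra_simps)
qed

text \<open>Both one-sided distances are 1-Lipschitz in the right direction, while \<open>u\<close> moves with slope 1.\<close>
lemma compress_less_compress:
  assumes "u < v" "0 \<le> t"
  shows "compress U u t < compress U v t"
  using left_dist_add_le[of "v - u" t U u] right_dist_le_add[of "v - u" t U u] assms
  by (simp add: compress_def field_simps)

lemma compress_bottom:
  assumes "\<bar>u\<bar> \<le> 2"
  shows "compress U u 1 = u"
proof -
  have "cutoff_dist (u - k) 1 = cutoff_dist (k - u) 1" if "k \<in> gap_set U" for k
    using that gap_set_subset assms cutoff_dist_at_1[of "u - k"] cutoff_dist_at_1[of "k - u"]
    by (force simp: abs_minus_commute)
  then show ?thesis
    unfolding compress_def left_dist_def right_dist_def by (simp cong: image_cong)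
qed

lemma compress_pm1:
  assumes "0 \<le> t"
  shows "compress U 1 t = 1" "compress U (-1) t = -1"
proof -
  have "cutoff_dist 0 t = 0" by (simp add: cutoff_dist_def)
  then have "left_dist U u t = 0" "right_dist U u t = 0" if "u \<in> gap_set U" for u
    unfolding left_dist_def right_dist_def
    by (intro cInf_eq_minimum; use that assms cutoff_dist_nonneg in force)+
  then show "compress U 1 t = 1" "compress U (-1) t = -1"
    using pm1_mem_gap_set unfolding compress_def by simp_all
qed

lemma continuous_on_compress_interior:
  "continuous_on {z. 0 < snd z} (\<lambda>z. compress U (fst z) (snd z))"
proof -
  have "continuous_on {z. 0 < snd z} (\<lambda>z. Inf ((\<lambda>k. cutoff_dist (\<sigma> * (fst z - k)) (snd z)) ` gap_set U))"
    if "\<bar>\<sigma>\<bar> = 1" for \<sigma> :: real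
    by (rule continuous_on_Inf_equicontinuous[OF gap_set_nonempty _
          cutoff_dist_equicontinuous[OF gap_set_subset that]])
      (auto intro: bdd_below_cutoff_dist_image)
  from this[of 1] this[of "-1"] show ?thesis
    unfolding compress_def left_dist_def right_dist_def by (auto intro!: continuous_intros)
qed

definition gap_below :: "real set \<Rightarrow> real \<Rightarrow> real" where
  "gap_below U u = Sup {k \<in> gap_set U. k \<le> u}"

definition gap_above :: "real set \<Rightarrow> real \<Rightarrow> real" where
  "gap_above U u = Inf {k \<in> gap_set U. u \<le> k}"

lemma gap_below_above:
  assumes U: "open U" and u: "u \<in> squash ` U"
  shows "gap_below U u \<in> gap_set U" "gap_above U u \<in> gap_set U"
    and "gap_below U u < u" "u < gap_above U u"
    and "\<And>k. k \<in> gap_set U \<Longrightarrow> k \<le> gap_below U u \<or> gap_above U u \<le> k"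
    and "-1 \<le> gap_below U u" "gap_above U u \<le> 1"
proof -
  have u1: "-1 < u" "u < 1" using u abs_squash_less by (auto simp: abs_less_iff)
  have uK: "u \<notin> gap_set U" using u by (simp add: gap_set_def)
  have ne: "{k \<in> gap_set U. k \<le> u} \<noteq> {}" "{k \<in> gap_set U. u \<le> k} \<noteq> {}"
    using pm1_mem_gap_set[of U] u1 by force+
  have "{k \<in> gap_set U. k \<le> u} = gap_set U \<inter> {..u}" "{k \<in> gap_set U. u \<le> k} = gap_set U \<inter> {u..}"
    by auto
  then have cl: "closed {k \<in> gap_set U. k \<le> u}" "closed {k \<in> gap_set U. u \<le> k}"
    using closed_gap_set[OF U] by (simp_all add: closed_Int)
  have bdd: "bdd_above {k \<in> gap_set U. k \<le> u}" "bdd_below {k \<in> gap_set U. u \<le> k}"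
    by (auto intro: bdd_aboveI[where M = u] bdd_belowI[where m = u])
  have A: "gap_below U u \<in> {k \<in> gap_set U. k \<le> u}"
    unfolding gap_below_def by (rule closed_contains_Sup[OF ne(1) bdd(1) cl(1)])
  have B: "gap_above U u \<in> {k \<in> gap_set U. u \<le> k}"
    unfolding gap_above_def by (rule closed_contains_Inf[OF ne(2) bdd(2) cl(2)])
  show "gap_below U u \<in> gap_set U" "gap_above U u \<in> gap_set U" using A B by auto
  show "gap_below U u < u" "u < gap_above U u" using A B uK by (auto simp: order.order_iff_strict)
  show "k \<le> gap_below U u \<or> gap_above U u \<le> k" if "k \<in> gap_set U" for k
    using that bdd unfolding gap_below_def gap_above_def
    by (cases "k \<le> u") (auto intro: cSup_upper cInf_lower)
  have "gap_below U u \<in> {-1..1}" "gap_above U u \<in> {-1..1}"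
    using A B gap_set_subset by blast+
  then show "-1 \<le> gap_below U u" "gap_above U u \<le> 1" by auto
qed

text \<open>Here the one-sided distances are the genuine distances \<open>u - a\<close> and \<open>b - u\<close>.\<close>
lemma compress_between_gaps:
  assumes ab: "a \<in> gap_set U" "b \<in> gap_set U" "\<And>k. k \<in> gap_set U \<Longrightarrow> k \<le> a \<or> b \<le> k"
    and u: "a < u" "u < b"
    and t: "0 \<le> t" "t = 0 \<or> 3 * t \<le> min (u - a) (b - u)"
  shows "compress U u t = u/2 + (a + b)/4"
proof -
  have "a \<in> {-1..1}" "b \<in> {-1..1}" using ab(1,2) gap_set_subset by blast+
  then have bounds: "-1 \<le> a" "b \<le> 1" by auto
  have far: "cutoff_dist s t = 3" if "s < 0" "min (u - a) (b - u) \<le> -s" for s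
    by (rule cutoff_dist_neg_arg) (use that t in auto)
  have "left_dist U u t = u - a"
    unfolding left_dist_def
  proof (rule cInf_eq_minimum)
    show "u - a \<in> (\<lambda>k. cutoff_dist (u - k) t) ` gap_set U"
      using ab u t cutoff_dist_nonneg_arg[of "u - a" t] by force
    fix x assume "x \<in> (\<lambda>k. cutoff_dist (u - k) t) ` gap_set U"
    then obtain k where k: "k \<in> gap_set U" "x = cutoff_dist (u - k) t" by auto
    show "u - a \<le> x"
    proof (cases "k \<le> a")
      case True then show ?thesis using k u t cutoff_dist_nonneg_arg[of "u - k" t] by auto
    next
      case False
      then have "b \<le> k" using ab k by auto
      then have "u - k < 0" "min (u - a) (b - u) \<le> - (u - k)"
        using u by (simp_all add: min_le_iff_disj)
      then have "cutoff_dist (u - k) t = 3" by (rule far)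
      then show ?thesis using k u bounds by linarith
    qed
  qed
  moreover have "right_dist U u t = b - u"
    unfolding right_dist_def
  proof (rule cInf_eq_minimum)
    show "b - u \<in> (\<lambda>k. cutoff_dist (k - u) t) ` gap_set U"
      using ab u t cutoff_dist_nonneg_arg[of "b - u" t] by force
    fix x assume "x \<in> (\<lambda>k. cutoff_dist (k - u) t) ` gap_set U"
    then obtain k where k: "k \<in> gap_set U" "x = cutoff_dist (k - u) t" by auto
    show "b - u \<le> x"
    proof (cases "b \<le> k")
      case True then show ?thesis using k u t cutoff_dist_nonneg_arg[of "k - u" t] by auto
    next
      case False
      then have "k \<le> a" using ab k by auto
      then have "k - u < 0" "min (u - a) (b - u) \<le> - (k - u)"
        using u by (simp_all add: min_le_iff_disj)
      then have "cutoff_dist (k - u) t = 3" by (rule far)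
      then show ?thesis using k u bounds by linarith
    qed
  qed
  ultimately show ?thesis unfolding compress_def by (simp add: field_simps)
qed

text \<open>At the top edge each gap is mapped affinely onto its middle half.\<close>
lemma compress_top:
  assumes "open U" "u \<in> squash ` U"
  shows "compress U u 0 = u/2 + (gap_below U u + gap_above U u)/4"
  by (rule compress_between_gaps) (use gap_below_above[OF assms] in auto)

lemma compress_near_gap:
  assumes "open U" "u0 \<in> squash ` U"
  obtains r where "0 < r"
    "\<And>u t. \<bar>u - u0\<bar> < r \<Longrightarrow> 0 \<le> t \<Longrightarrow> t < r \<Longrightarrow>
       compress U u t = u/2 + (gap_below U u0 + gap_above U u0)/4"
proof
  note gaps = gap_below_above[OF assms]
  define r where "r = min (u0 - gap_below U u0) (gap_above U u0 - u0) / 6"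
  show "0 < r" using gaps by (simp add: r_def)
  fix u t assume "\<bar>u - u0\<bar> < r" "0 \<le> t" "t < r"
  moreover have "r \<le> (u0 - gap_below U u0) / 6" "r \<le> (gap_above U u0 - u0) / 6"
    unfolding r_def by auto
  ultimately have "gap_below U u0 < u" "u < gap_above U u0"
    "3 * t \<le> min (u - gap_below U u0) (gap_above U u0 - u)"
    by (auto simp: abs_less_iff)
  with \<open>0 \<le> t\<close> show "compress U u t = u/2 + (gap_below U u0 + gap_above U u0)/4"
    by (intro compress_between_gaps gaps) auto
qed

definition compress_domain :: "real set \<Rightarrow> (real \<times> real) set" where
  "compress_domain U = {z. 0 < snd z} \<union> squash ` U \<times> {0}"

lemma continuous_on_compress:
  assumes U: "open U"
  shows "continuous_on (compress_domain U) (\<lambda>z. compress U (fst z) (snd z))"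
  unfolding continuous_on_eq_continuous_within
proof
  fix z0 assume z0: "z0 \<in> compress_domain U"
  show "continuous (at z0 within compress_domain U) (\<lambda>z. compress U (fst z) (snd z))"
  proof (cases "0 < snd z0")
    case True
    have "open {z :: real \<times> real. 0 < snd z}"
      by (intro open_Collect_less continuous_intros)
    then have "z0 \<in> interior {z. 0 < snd z}" using True by (simp add: interior_open)
    then show ?thesis
      by (rule continuous_at_imp_continuous_within[OF
            continuous_on_interior[OF continuous_on_compress_interior]])
  next
    case False
    then obtain u0 where z0_eq: "z0 = (u0, 0)" and u0: "u0 \<in> squash ` U"
      using z0 by (cases z0) (auto simp: compress_domain_def)
    define c where "c = (gap_below U u0 + gap_above U u0)/4"
    obtain r where r: "0 < r"
      "\<And>u t. \<bar>u - u0\<bar> < r \<Longrightarrow> 0 \<le> t \<Longrightarrow> t < r \<Longrightarrow> compress U u t = u/2 + c"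
      using compress_near_gap[OF U u0] unfolding c_def by blast
    have eq: "fst z/2 + c = compress U (fst z) (snd z)" if "z \<in> compress_domain U" "dist z z0 < r" for z
    proof -
      have "\<bar>fst z - u0\<bar> < r" "\<bar>snd z\<bar> < r"
        using that(2) dist_fst_le[of z z0] dist_snd_le[of z z0] by (simp_all add: z0_eq dist_real_def)
      moreover have "0 \<le> snd z" using that(1) by (auto simp: compress_domain_def)
      ultimately show ?thesis using r(2) by simp
    qed
    have affine: "continuous (at z0 within compress_domain U) (\<lambda>z. fst z/2 + c)"
      by (intro continuous_intros) simp
    show ?thesis
      by (rule continuous_transform_within[OF affine r(1) z0 eq])
  qed
qed

lemma abs_compress_less:
  assumes U: "open U" and "0 \<le> t" and "0 < t \<and> \<bar>u\<bar> < 1 \<or> t = 0 \<and> u \<in> squash ` U"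
  shows "\<bar>compress U u t\<bar> < 1"
  using assms(3)
proof
  assume "0 < t \<and> \<bar>u\<bar> < 1"
  then have "compress U (-1) t < compress U u t" "compress U u t < compress U 1 t"
    using compress_less_compress[of _ _ t U] by (auto simp: abs_less_iff)
  then show ?thesis using compress_pm1[OF assms(2), of U] by (auto simp: abs_less_iff)
next
  assume "t = 0 \<and> u \<in> squash ` U"
  then have "t = 0" and u: "u \<in> squash ` U" by auto
  then show ?thesis
    using compress_top[OF U u] gap_below_above(3,4,6,7)[OF U u] by (auto simp: abs_less_iff field_simps)
qed

section \<open>Leafwise monotone homeomorphisms\<close>

lemma inj_on_leafwise_mono:
  fixes f :: "real \<times> real \<Rightarrow> real"
  assumes "\<And>a b y. (a, y) \<in> S \<Longrightarrow> (b, y) \<in> S \<Longrightarrow> a < b \<Longrightarrow> f (a, y) < f (b, y)"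
  shows "inj_on (\<lambda>p. (f p, snd p)) S"
proof (rule inj_onI)
  fix p q assume pq: "p \<in> S" "q \<in> S" "(f p, snd p) = (f q, snd q)"
  then obtain a b y where p: "p = (a, y)" and q: "q = (b, y)" by (cases p, cases q) auto
  then have "\<not> a < b" "\<not> b < a" using pq assms[of a y b] assms[of b y a] by auto
  then show "p = q" using p q by simp
qed

lemma leafwise_mono_inverse_estimate:
  fixes f :: "real \<times> real \<Rightarrow> real"
  assumes cont: "continuous_on S f"
    and mono: "\<And>a b y. (a, y) \<in> S \<Longrightarrow> (b, y) \<in> S \<Longrightarrow> a < b \<Longrightarrow> f (a, y) < f (b, y)"
    and full: "\<And>x y x'. \<bar>x - x0\<bar> \<le> r \<Longrightarrow> \<bar>y - y0\<bar> < r \<Longrightarrow> (x', y) \<in> S \<Longrightarrow> (x, y) \<in> S"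
    and p0: "(x0, y0) \<in> S" and \<epsilon>: "0 < \<epsilon>" "\<epsilon> \<le> r"
  obtains d where "0 < d"
    "\<And>x y. (x, y) \<in> S \<Longrightarrow> \<bar>y - y0\<bar> < d \<Longrightarrow> \<bar>f (x, y) - f (x0, y0)\<bar> < d \<Longrightarrow> \<bar>x - x0\<bar> \<le> \<epsilon>"
proof -
  have ends: "(x0 - \<epsilon>, y0) \<in> S" "(x0 + \<epsilon>, y0) \<in> S"
    using full[OF _ _ p0] \<epsilon> by auto
  define \<gamma> where "\<gamma> = min (f (x0, y0) - f (x0 - \<epsilon>, y0)) (f (x0 + \<epsilon>, y0) - f (x0, y0)) / 2"
  have \<gamma>: "0 < \<gamma>" using mono[OF ends(1) p0] mono[OF p0 ends(2)] \<epsilon> by (simp add: \<gamma>_def)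
  obtain \<eta>1 where \<eta>1: "0 < \<eta>1"
    "\<And>p. p \<in> S \<Longrightarrow> dist p (x0 - \<epsilon>, y0) < \<eta>1 \<Longrightarrow> dist (f p) (f (x0 - \<epsilon>, y0)) < \<gamma>"
    using cont ends(1) \<gamma> unfolding continuous_on_iff by metis
  obtain \<eta>2 where \<eta>2: "0 < \<eta>2"
    "\<And>p. p \<in> S \<Longrightarrow> dist p (x0 + \<epsilon>, y0) < \<eta>2 \<Longrightarrow> dist (f p) (f (x0 + \<epsilon>, y0)) < \<gamma>"
    using cont ends(2) \<gamma> unfolding continuous_on_iff by metis
  show ?thesis
  proof
    show "0 < min (min \<gamma> \<epsilon>) (min \<eta>1 \<eta>2)" using \<gamma> \<epsilon> \<eta>1 \<eta>2 by simp
    fix x y assume p: "(x, y) \<in> S" and dy: "\<bar>y - y0\<bar> < min (min \<gamma> \<epsilon>) (min \<eta>1 \<eta>2)"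
      and df: "\<bar>f (x, y) - f (x0, y0)\<bar> < min (min \<gamma> \<epsilon>) (min \<eta>1 \<eta>2)"
    have ends_y: "(x0 - \<epsilon>, y) \<in> S" "(x0 + \<epsilon>, y) \<in> S"
      using full[OF _ _ p] dy \<epsilon> by auto
    have "dist (x0 - \<epsilon>, y) (x0 - \<epsilon>, y0) < \<eta>1" "dist (x0 + \<epsilon>, y) (x0 + \<epsilon>, y0) < \<eta>2"
      using dy by (simp_all add: dist_Pair_Pair dist_real_def)
    then have "\<bar>f (x0 - \<epsilon>, y) - f (x0 - \<epsilon>, y0)\<bar> < \<gamma>" "\<bar>f (x0 + \<epsilon>, y) - f (x0 + \<epsilon>, y0)\<bar> < \<gamma>"
      using \<eta>1(2)[OF ends_y(1)] \<eta>2(2)[OF ends_y(2)] by (auto simp: dist_real_def)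
    moreover have "\<bar>f (x, y) - f (x0, y0)\<bar> < \<gamma>" using df by simp
    moreover have "2 * \<gamma> \<le> f (x0, y0) - f (x0 - \<epsilon>, y0)" "2 * \<gamma> \<le> f (x0 + \<epsilon>, y0) - f (x0, y0)"
      unfolding \<gamma>_def by auto
    ultimately have "f (x0 - \<epsilon>, y) < f (x, y)" "f (x, y) < f (x0 + \<epsilon>, y)"
      unfolding abs_less_iff by linarith+
    then have "\<not> x < x0 - \<epsilon>" "\<not> x0 + \<epsilon> < x"
      using mono[OF p ends_y(1)] mono[OF ends_y(2) p] by auto
    then show "\<bar>x - x0\<bar> \<le> \<epsilon>" by auto
  qed
qed

lemma homeomorphic_map_leafwise_mono:
  fixes f :: "real \<times> real \<Rightarrow> real"
  assumes cont: "continuous_on S f"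
    and mono: "\<And>a b y. (a, y) \<in> S \<Longrightarrow> (b, y) \<in> S \<Longrightarrow> a < b \<Longrightarrow> f (a, y) < f (b, y)"
    and full: "\<And>x0 y0. (x0, y0) \<in> S \<Longrightarrow> \<exists>r>0. \<forall>x y x'.
       \<bar>x - x0\<bar> \<le> r \<longrightarrow> \<bar>y - y0\<bar> < r \<longrightarrow> (x', y) \<in> S \<longrightarrow> (x, y) \<in> S"
  shows "homeomorphic_map (top_of_set S) (top_of_set ((\<lambda>p. (f p, snd p)) ` S)) (\<lambda>p. (f p, snd p))"
proof -
  define h where "h = (\<lambda>p. (f p, snd p))"
  have inj: "inj_on h S" unfolding h_def by (rule inj_on_leafwise_mono) (rule mono)
  have "continuous_on (h ` S) (inv_into S h)"
    unfolding continuous_on_iff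
  proof (intro ballI allI impI)
    fix q0 and e :: real assume "q0 \<in> h ` S" "0 < e"
    then obtain x0 y0 where p0: "(x0, y0) \<in> S" "q0 = h (x0, y0)" by auto
    obtain r where "0 < r" and
      r: "\<And>x y x'. \<bar>x - x0\<bar> \<le> r \<Longrightarrow> \<bar>y - y0\<bar> < r \<Longrightarrow> (x', y) \<in> S \<Longrightarrow> (x, y) \<in> S"
      using full[OF p0(1)] by blast
    obtain d where d: "0 < d" "\<And>x y. (x, y) \<in> S \<Longrightarrow> \<bar>y - y0\<bar> < d \<Longrightarrow>
        \<bar>f (x, y) - f (x0, y0)\<bar> < d \<Longrightarrow> \<bar>x - x0\<bar> \<le> min r (e/3)"
      by (rule leafwise_mono_inverse_estimate[OF cont mono r p0(1), where \<epsilon> = "min r (e/3)"])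
        (use \<open>0 < r\<close> \<open>0 < e\<close> in auto)
    show "\<exists>d>0. \<forall>q\<in>h ` S. dist q q0 < d \<longrightarrow> dist (inv_into S h q) (inv_into S h q0) < e"
    proof (intro exI conjI ballI impI)
      show "0 < min d (e/2)" using d(1) \<open>0 < e\<close> by simp
      fix q assume "q \<in> h ` S" "dist q q0 < min d (e/2)"
      then obtain x y where p: "(x, y) \<in> S" "q = h (x, y)" and dq: "dist q q0 < min d (e/2)" by auto
      have "\<bar>y - y0\<bar> < min d (e/2)" "\<bar>f (x, y) - f (x0, y0)\<bar> < d"
        using dq dist_fst_le[of q q0] dist_snd_le[of q q0] by (auto simp: p p0 h_def dist_real_def)
      then have "\<bar>x - x0\<bar> \<le> e/3" "\<bar>y - y0\<bar> < e/2" using d(2)[OF p(1)] by auto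
      moreover have "dist (x, y) (x0, y0) \<le> \<bar>x - x0\<bar> + \<bar>y - y0\<bar>"
        using sqrt_sum_squares_le_sum_abs[of "x - x0" "y - y0"] by (simp add: dist_Pair_Pair dist_real_def)
      ultimately have "dist (x, y) (x0, y0) < e" by linarith
      then show "dist (inv_into S h q) (inv_into S h q0) < e"
        using inj p p0 by simp
    qed
  qed
  moreover have "continuous_on S h" unfolding h_def by (intro continuous_intros cont)
  ultimately have "homeomorphic_maps (top_of_set S) (top_of_set (h ` S)) h (inv_into S h)"
    using inj unfolding homeomorphic_maps_def by (auto simp: inv_into_into)
  then show ?thesis unfolding h_def homeomorphic_map_maps by blast
qed

section \<open>The top edge\<close>

definition leaf_coord :: "real set \<Rightarrow> real \<times> real \<Rightarrow> real" where
  "leaf_coord U p = unsquash (compress U (squash (fst p)) (1 - snd p))"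

definition box_lo :: "real set \<Rightarrow> real \<Rightarrow> real" where
  "box_lo U x = unsquash ((3 * gap_below U (squash x) + gap_above U (squash x)) / 4)"

definition box_hi :: "real set \<Rightarrow> real \<Rightarrow> real" where
  "box_hi U x = unsquash ((gap_below U (squash x) + 3 * gap_above U (squash x)) / 4)"

lemma gap_set_outside_squash_interval:
  assumes "{a..b} \<subseteq> U" "k \<in> gap_set U"
  shows "k < squash a \<or> squash b < k"
proof (rule ccontr)
  assume "\<not> (k < squash a \<or> squash b < k)"
  then have k: "squash a \<le> k" "k \<le> squash b" by auto
  then have "\<bar>k\<bar> < 1" using abs_squash_less[of a] abs_squash_less[of b] by (auto simp: abs_less_iff)
  then have "a \<le> unsquash k" "unsquash k \<le> b"
    using unsquash_le_unsquash[OF abs_squash_less _ k(1)] unsquash_le_unsquash[OF _ abs_squash_less k(2)]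
    by auto
  then have "squash (unsquash k) \<in> squash ` U" using assms(1) by auto
  then show False using assms(2) squash_unsquash[OF \<open>\<bar>k\<bar> < 1\<close>] by (simp add: gap_set_def)
qed

lemma same_gaps:
  assumes "{min x x'..max x x'} \<subseteq> U" "x \<in> U" "x' \<in> U"
  shows "gap_below U (squash x') = gap_below U (squash x)"
    and "gap_above U (squash x') = gap_above U (squash x)"
proof -
  have "k \<le> squash x \<longleftrightarrow> k \<le> squash x'" "squash x \<le> k \<longleftrightarrow> squash x' \<le> k" if "k \<in> gap_set U" for k
    using gap_set_outside_squash_interval[OF assms(1) that]
      squash_le_squash[of "min x x'" x] squash_le_squash[of "min x x'" x']
      squash_le_squash[of x "max x x'"] squash_le_squash[of x' "max x x'"]
    by force+
  then have "{k \<in> gap_set U. k \<le> squash x'} = {k \<in> gap_set U. k \<le> squash x}"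
    "{k \<in> gap_set U. squash x' \<le> k} = {k \<in> gap_set U. squash x \<le> k}"
    by auto
  then show "gap_below U (squash x') = gap_below U (squash x)"
    "gap_above U (squash x') = gap_above U (squash x)"
    by (simp_all add: gap_below_def gap_above_def)
qed

lemma leaf_coord_top_in_box:
  assumes U: "open U" and "{min x x'..max x x'} \<subseteq> U" "x \<in> U" "x' \<in> U"
  shows "box_lo U x \<le> leaf_coord U (x', 1)" "leaf_coord U (x', 1) \<le> box_hi U x"
proof -
  have u: "squash x' \<in> squash ` U" using assms by auto
  note gaps = gap_below_above[OF U u] and same = same_gaps[OF assms(2-4)]
  have "leaf_coord U (x', 1) = unsquash (squash x'/2 + (gap_below U (squash x) + gap_above U (squash x))/4)"
    unfolding leaf_coord_def using compress_top[OF U u] same by simp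
  then show "box_lo U x \<le> leaf_coord U (x', 1)" "leaf_coord U (x', 1) \<le> box_hi U x"
    unfolding box_lo_def box_hi_def using gaps(3,4,6,7) same
    by (auto intro!: unsquash_le_unsquash simp: abs_less_iff field_simps)
qed

lemma box_subset:
  assumes U: "open U" and x: "x \<in> U"
  shows "{box_lo U x..box_hi U x} \<subseteq> U"
proof
  fix z assume z: "z \<in> {box_lo U x..box_hi U x}"
  have u: "squash x \<in> squash ` U" using x by auto
  note gaps = gap_below_above[OF U u]
  define a where "a = gap_below U (squash x)"
  define b where "b = gap_above U (squash x)"
  have ab: "-1 \<le> a" "b \<le> 1" "a < b" using gaps by (auto simp: a_def b_def)
  have "\<bar>(3*a + b)/4\<bar> < 1" "\<bar>(a + 3*b)/4\<bar> < 1" using ab by (auto simp: abs_less_iff)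
  then have "(3*a + b)/4 \<le> squash z" "squash z \<le> (a + 3*b)/4"
    using z squash_le_squash[of "box_lo U x" z] squash_le_squash[of z "box_hi U x"]
    by (auto simp: box_lo_def box_hi_def a_def[symmetric] b_def[symmetric] squash_unsquash)
  then have "squash z \<notin> gap_set U" using gaps(5) ab by (force simp: a_def b_def)
  moreover have "squash z \<in> {-1..1}" using abs_squash_less[of z] by (auto simp: abs_less_iff)
  ultimately show "z \<in> U" by (simp add: gap_set_def squash_mem_image_iff)
qed

lemma gap_separates_boxes:
  assumes U: "open U" and "x \<in> U" "x' \<in> U" "k \<notin> U" "x < k" "k < x'"
  shows "box_hi U x < k" "k < box_lo U x'"
proof -
  have k: "squash k \<in> gap_set U"
    using assms abs_squash_less[of k] squash_mem_image_iff[of k U] by (auto simp: gap_set_def abs_less_iff)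
  have u: "squash x \<in> squash ` U" "squash x' \<in> squash ` U" using assms by auto
  note gaps = gap_below_above[OF U u(1)] and gaps' = gap_below_above[OF U u(2)]
  have "squash x < squash k" "squash k < squash x'" using assms squash_less_squash by auto
  then have "gap_above U (squash x) \<le> squash k" "squash k \<le> gap_below U (squash x')"
    using gaps(3,5) gaps'(4,5) k by force+
  then have c: "(gap_below U (squash x) + 3 * gap_above U (squash x))/4 < squash k"
    "squash k < (3 * gap_below U (squash x') + gap_above U (squash x'))/4"
    using gaps gaps' by auto
  have "\<bar>(gap_below U (squash x) + 3 * gap_above U (squash x))/4\<bar> < 1"
    "\<bar>(3 * gap_below U (squash x') + gap_above U (squash x'))/4\<bar> < 1"
    using gaps gaps' by (auto simp: abs_less_iff)
  then show "box_hi U x < k" "k < box_lo U x'"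
    unfolding box_hi_def box_lo_def
    using unsquash_less_unsquash[OF _ abs_squash_less c(1)] unsquash_less_unsquash[OF abs_squash_less _ c(2)]
    by auto
qed

lemma gap_separates_boxes_sym:
  assumes "open U" "x \<in> U" "x' \<in> U" "\<not> {min x x'..max x x'} \<subseteq> U"
  obtains k where "k \<notin> U" "box_hi U x < k \<and> k < box_lo U x' \<or> box_hi U x' < k \<and> k < box_lo U x"
proof -
  obtain k where k: "k \<in> {min x x'..max x x'}" "k \<notin> U" using assms(4) by blast
  then have "x < k \<and> k < x' \<or> x' < k \<and> k < x"
    using assms(2,3) by (cases "x \<le> x'") (auto simp: min_def max_def order.order_iff_strict)
  then show ?thesis
    using that[OF k(2)] gap_separates_boxes[OF assms(1,2,3) k(2)] gap_separates_boxes[OF assms(1,3,2) k(2)]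
    by blast
qed


section \<open>Neighbourhoods of the half-open strip\<close>

locale strip_nbhd =
  fixes S :: "(real \<times> real) set"
  assumes strip_subset: "UNIV \<times> {0..<1} \<subseteq> S"
    and subset_strip: "S \<subseteq> UNIV \<times> {0..1}"
    and openin_strip: "openin (top_of_set (UNIV \<times> {0..1})) S"
begin

definition top_slice :: "real set" where
  "top_slice = {x. (x, 1) \<in> S}"

definition leaf_map :: "real \<times> real \<Rightarrow> real \<times> real" where
  "leaf_map p = (leaf_coord top_slice p, snd p)"

lemma open_top_slice: "open top_slice"
proof -
  obtain T where T: "open T" "S = UNIV \<times> {0..1} \<inter> T"
    using openin_strip unfolding openin_open by blast
  then have "top_slice = (\<lambda>x. (x, 1::real)) -` T" unfolding top_slice_def by auto
  moreover have "open ((\<lambda>x. (x, 1::real)) -` T)"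
    by (rule continuous_open_vimage[OF T(1)]) (intro continuous_intros)
  ultimately show ?thesis by simp
qed

lemma mem_S_iff: "(x, y) \<in> S \<longleftrightarrow> 0 \<le> y \<and> (y < 1 \<or> y = 1 \<and> x \<in> top_slice)"
  using strip_subset subset_strip by (force simp: top_slice_def)

lemma locally_leafwise_full:
  assumes "(x0, y0) \<in> S"
  shows "\<exists>r>0. \<forall>x y x'. \<bar>x - x0\<bar> \<le> r \<longrightarrow> \<bar>y - y0\<bar> < r \<longrightarrow> (x', y) \<in> S \<longrightarrow> (x, y) \<in> S"
proof (cases "y0 < 1")
  case True
  then show ?thesis by (intro exI[of _ "1 - y0"]) (auto simp: mem_S_iff abs_less_iff)
next
  case False
  then have "x0 \<in> top_slice" using assms by (simp add: mem_S_iff)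
  then obtain r where "0 < r" "cball x0 r \<subseteq> top_slice"
    using open_top_slice open_contains_cball by blast
  then show ?thesis
    by (intro exI[of _ r]) (auto simp: mem_S_iff subset_iff dist_real_def abs_minus_commute)
qed

lemma compress_domain_leaf:
  assumes "p \<in> S"
  shows "(squash (fst p), 1 - snd p) \<in> compress_domain top_slice"
  using assms by (cases p) (auto simp: mem_S_iff compress_domain_def)

lemma abs_compress_leaf_less:
  assumes "p \<in> S"
  shows "\<bar>compress top_slice (squash (fst p)) (1 - snd p)\<bar> < 1"
  using assms abs_squash_less
  by (cases p) (auto simp: mem_S_iff intro!: abs_compress_less[OF open_top_slice])

lemma continuous_on_leaf_coord: "continuous_on S (leaf_coord top_slice)"
proof -
  have "continuous_on S (\<lambda>p. compress top_slice (fst (squash (fst p), 1 - snd p)) (snd (squash (fst p), 1 - snd p)))"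
    by (rule continuous_on_compose2[OF continuous_on_compress[OF open_top_slice]])
      (auto intro!: continuous_intros continuous_on_compose2[OF continuous_on_squash] compress_domain_leaf)
  then have "continuous_on S (\<lambda>p. compress top_slice (squash (fst p)) (1 - snd p))"
    by simp
  then have "continuous_on S (\<lambda>p. unsquash (compress top_slice (squash (fst p)) (1 - snd p)))"
    by (rule continuous_on_compose2[OF continuous_on_unsquash])
      (use abs_compress_leaf_less in \<open>auto simp: abs_less_iff\<close>)
  then show ?thesis unfolding leaf_coord_def[abs_def] by simp
qed

lemma leaf_coord_less:
  assumes "(a, y) \<in> S" "(b, y) \<in> S" "a < b"
  shows "leaf_coord top_slice (a, y) < leaf_coord top_slice (b, y)"
proof -
  have "compress top_slice (squash a) (1 - y) < compress top_slice (squash b) (1 - y)"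
    using assms squash_less_squash by (intro compress_less_compress) (auto simp: mem_S_iff)
  then show ?thesis
    using abs_compress_leaf_less[OF assms(1)] abs_compress_leaf_less[OF assms(2)]
    unfolding leaf_coord_def by (simp add: unsquash_less_unsquash)
qed

lemma homeomorphic_map_leaf_map: "homeomorphic_map (top_of_set S) (top_of_set (leaf_map ` S)) leaf_map"
  unfolding leaf_map_def[abs_def]
  by (rule homeomorphic_map_leafwise_mono[OF continuous_on_leaf_coord leaf_coord_less locally_leafwise_full])

lemma leaf_map_bottom: "leaf_map (x, 0) = (x, 0)"
  using compress_bottom[of "squash x" top_slice] abs_squash_less[of x]
  by (simp add: leaf_map_def leaf_coord_def)

lemma snd_leaf_map: "snd (leaf_map p) = snd p"
  by (simp add: leaf_map_def)

lemma strip_subset_leaf_image: "UNIV \<times> {0..<1} \<subseteq> leaf_map ` S"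
proof clarify
  fix w y :: real assume y: "y \<in> {0..<1}"
  have "continuous_on {-1..1} (\<lambda>u. compress top_slice (fst (u, 1 - y)) (snd (u, 1 - y)))"
    by (rule continuous_on_compose2[OF continuous_on_compress_interior]) (use y in \<open>auto intro!: continuous_intros\<close>)
  then obtain u where u: "-1 \<le> u" "u \<le> 1" "compress top_slice u (1 - y) = squash w"
    using IVT'[of "\<lambda>u. compress top_slice u (1 - y)" "-1" "squash w" 1] compress_pm1[of "1 - y" top_slice]
      abs_squash_less[of w] y
    by (auto simp: abs_less_iff)
  moreover have "u \<noteq> 1" "u \<noteq> -1"
    using u(3) compress_pm1[of "1 - y" top_slice] abs_squash_less[of w] y by auto
  ultimately have "\<bar>u\<bar> < 1" by auto
  then have "leaf_map (unsquash u, y) = (w, y)"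
    using u(3) by (simp add: leaf_map_def leaf_coord_def squash_unsquash)
  moreover have "(unsquash u, y) \<in> S" using y by (simp add: mem_S_iff)
  ultimately show "(w, y) \<in> leaf_map ` S" by (metis image_eqI)
qed

lemma leaf_coord_top_mem: "x \<in> top_slice \<Longrightarrow> leaf_coord top_slice (x, 1) \<in> {box_lo top_slice x..box_hi top_slice x}"
  using leaf_coord_top_in_box[OF open_top_slice, of x x] by simp

lemma leaf_coord_top_in_top_slice: "x \<in> top_slice \<Longrightarrow> leaf_coord top_slice (x, 1) \<in> top_slice"
  using box_subset[OF open_top_slice] leaf_coord_top_mem by blast

lemma leaf_image_subset: "leaf_map ` S \<subseteq> S"
proof (rule image_subsetI, safe)
  fix x y assume "(x, y) \<in> S"
  then show "leaf_map (x, y) \<in> S"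
    using leaf_coord_top_in_top_slice by (auto simp: mem_S_iff leaf_map_def)
qed

abbreviation top_edge :: "(real \<times> real) set" where
  "top_edge \<equiv> leaf_map ` S \<inter> UNIV \<times> {1}"

lemma mem_top_edge_iff: "z \<in> top_edge \<longleftrightarrow> (\<exists>x\<in>top_slice. z = (leaf_coord top_slice (x, 1), 1))"
proof
  assume z: "z \<in> top_edge"
  then obtain p where "p \<in> S" "z = leaf_map p" by blast
  moreover have "snd z = 1" using z by (auto simp: mem_Times_iff)
  ultimately show "\<exists>x\<in>top_slice. z = (leaf_coord top_slice (x, 1), 1)"
    by (cases p) (auto simp: leaf_map_def top_slice_def)
next
  assume "\<exists>x\<in>top_slice. z = (leaf_coord top_slice (x, 1), 1)"
  then obtain x where x: "(x, 1) \<in> S" "z = leaf_map (x, 1)"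
    by (auto simp: leaf_map_def top_slice_def)
  then show "z \<in> top_edge" by (auto simp: leaf_map_def)
qed

lemma connected_top_edge_interval:
  assumes E: "connected E" "E \<subseteq> top_edge"
    and x: "x \<in> top_slice" "(leaf_coord top_slice (x, 1), 1) \<in> E"
    and x': "x' \<in> top_slice" "(leaf_coord top_slice (x', 1), 1) \<in> E"
  shows "{min x x'..max x x'} \<subseteq> top_slice"
proof (rule ccontr)
  assume "\<not> {min x x'..max x x'} \<subseteq> top_slice"
  then obtain k where k: "k \<notin> top_slice" and
    "box_hi top_slice x < k \<and> k < box_lo top_slice x' \<or> box_hi top_slice x' < k \<and> k < box_lo top_slice x"
    using gap_separates_boxes_sym[OF open_top_slice x(1) x'(1)] by blast
  then have between: "k \<in> {leaf_coord top_slice (x, 1)..leaf_coord top_slice (x', 1)} \<union>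
      {leaf_coord top_slice (x', 1)..leaf_coord top_slice (x, 1)}"
    using leaf_coord_top_mem[OF x(1)] leaf_coord_top_mem[OF x'(1)] by auto
  have "connected (fst ` E)"
    by (rule connected_continuous_image[OF _ E(1)]) (intro continuous_intros)
  moreover have "leaf_coord top_slice (x, 1) \<in> fst ` E" "leaf_coord top_slice (x', 1) \<in> fst ` E"
    using x(2) x'(2) by force+
  ultimately have "k \<in> fst ` E"
    using between connected_contains_Icc by blast
  then obtain z where z: "z \<in> top_edge" "fst z = k" using E(2) by blast
  then obtain x'' where "x'' \<in> top_slice" "k = leaf_coord top_slice (x'', 1)"
    unfolding mem_top_edge_iff by auto
  then show False using k leaf_coord_top_in_top_slice by simp
qed

lemma top_component_closure_in_box:
  assumes C: "C \<in> components top_edge"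
  obtains x where "x \<in> top_slice" "(leaf_coord top_slice (x, 1), 1) \<in> C"
    "closure C \<subseteq> {box_lo top_slice x..box_hi top_slice x} \<times> {1}"
proof -
  have C_sub: "C \<subseteq> top_edge" and "connected C" and "C \<noteq> {}"
    using in_components_subset[OF C] in_components_connected[OF C] in_components_nonempty[OF C] .
  have points: "\<exists>x\<in>top_slice. z = (leaf_coord top_slice (x, 1), 1)" if "z \<in> C" for z
    using that C_sub unfolding subset_iff mem_top_edge_iff by blast
  obtain z where "z \<in> C" using \<open>C \<noteq> {}\<close> by blast
  then obtain x where x: "x \<in> top_slice" "(leaf_coord top_slice (x, 1), 1) \<in> C"
    using points by blast
  have "C \<subseteq> {box_lo top_slice x..box_hi top_slice x} \<times> {1}"
  proof
    fix z assume "z \<in> C"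
    then obtain x' where x': "x' \<in> top_slice" "z = (leaf_coord top_slice (x', 1), 1)"
      using points by blast
    have "{min x x'..max x x'} \<subseteq> top_slice"
      by (rule connected_top_edge_interval[OF \<open>connected C\<close> C_sub x x'(1)]) (use x' \<open>z \<in> C\<close> in simp)
    then show "z \<in> {box_lo top_slice x..box_hi top_slice x} \<times> {1}"
      using leaf_coord_top_in_box[OF open_top_slice _ x(1) x'(1)] x' by simp
  qed
  moreover have "closed ({box_lo top_slice x..box_hi top_slice x} \<times> {1::real})"
    by (rule closed_Times) auto
  ultimately have "closure C \<subseteq> {box_lo top_slice x..box_hi top_slice x} \<times> {1}"
    by (rule closure_minimal)
  then show ?thesis using that x by blast
qed

lemma bounded_closure_top_component:
  assumes "C \<in> components top_edge"
  shows "bounded (closure C)"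
proof -
  obtain x where "closure C \<subseteq> {box_lo top_slice x..box_hi top_slice x} \<times> {1}"
    using top_component_closure_in_box[OF assms] by blast
  moreover have "bounded ({box_lo top_slice x..box_hi top_slice x} \<times> {1::real})"
    by (intro bounded_Times) auto
  ultimately show ?thesis using bounded_subset by blast
qed

lemma disjoint_closure_top_components:
  assumes C: "C \<in> components top_edge" and D: "D \<in> components top_edge" and "C \<noteq> D"
  shows "closure C \<inter> closure D = {}"
proof -
  obtain x where x: "x \<in> top_slice" "(leaf_coord top_slice (x, 1), 1) \<in> C"
    and C_box: "closure C \<subseteq> {box_lo top_slice x..box_hi top_slice x} \<times> {1}"
    using top_component_closure_in_box[OF C] by blast
  obtain x' where x': "x' \<in> top_slice" "(leaf_coord top_slice (x', 1), 1) \<in> D"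
    and D_box: "closure D \<subseteq> {box_lo top_slice x'..box_hi top_slice x'} \<times> {1}"
    using top_component_closure_in_box[OF D] by blast
  show ?thesis
  proof (cases "{min x x'..max x x'} \<subseteq> top_slice")
    case True
    define E where "E = (\<lambda>z. (leaf_coord top_slice (z, 1), 1::real)) ` {min x x'..max x x'}"
    have "continuous_on {min x x'..max x x'} (\<lambda>z. leaf_coord top_slice (z, 1))"
      by (rule continuous_on_compose2[OF continuous_on_leaf_coord])
        (use True in \<open>auto intro!: continuous_intros simp: top_slice_def\<close>)
    then have "connected E"
      unfolding E_def by (intro connected_continuous_image connected_Icc continuous_intros)
    moreover have "E \<subseteq> top_edge" unfolding E_def using True mem_top_edge_iff by blast
    moreover have "(leaf_coord top_slice (x, 1), 1) \<in> E" "(leaf_coord top_slice (x', 1), 1) \<in> E"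
      unfolding E_def by auto
    ultimately have "(leaf_coord top_slice (x', 1), 1) \<in> C"
      using components_maximal[OF C] x(2) by blast
    then have "C \<inter> D \<noteq> {}" using x'(2) by blast
    then show ?thesis using components_nonoverlap[OF C D] \<open>C \<noteq> D\<close> by simp
  next
    case False
    then obtain k where "box_hi top_slice x < k \<and> k < box_lo top_slice x' \<or>
        box_hi top_slice x' < k \<and> k < box_lo top_slice x"
      using gap_separates_boxes_sym[OF open_top_slice x(1) x'(1)] by blast
    then show ?thesis using C_box D_box by fastforce
  qed
qed

end

theorem mainTheorem3:
  fixes S :: "(real \<times> real) set"
  assumes "UNIV \<times> {0..<1} \<subseteq> S"
      and "S \<subseteq> UNIV \<times> {0..1}"
      and "openin (top_of_set (UNIV \<times> {0..1})) S"
  shows "\<exists>S' h. homeomorphic_map (top_of_set S) (top_of_set S') h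
     \<and> UNIV \<times> {0..<1} \<subseteq> S' \<and> S' \<subseteq> S
     \<and> (\<forall>C\<in>components (S' \<inter> (UNIV \<times> {1})). bounded (closure C))
     \<and> (\<forall>C\<in>components (S' \<inter> (UNIV \<times> {1})). \<forall>D\<in>components (S' \<inter> (UNIV \<times> {1})).
           C \<noteq> D \<longrightarrow> closure C \<inter> closure D = {})
     \<and> (\<forall>x. h (x, 0) = (x, 0))
     \<and> (\<forall>p\<in>S. snd (h p) = snd p)"
proof -
  interpret strip_nbhd S
    using assms by unfold_locales
  show ?thesis
  proof (intro exI conjI)
    show "homeomorphic_map (top_of_set S) (top_of_set (leaf_map ` S)) leaf_map"
      by (rule homeomorphic_map_leaf_map)
  qed (use strip_subset_leaf_image leaf_image_subset bounded_closure_top_component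
        disjoint_closure_top_components leaf_map_bottom snd_leaf_map in auto)
qed

end
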